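(* For all $m\in\mathbb N$, all $\epsilon\in(0,1)$ and all $c\in(0,1/5)$, $$\mathbb E_{\theta^\circ}P_{\vartheta^m|Y}\Big(\|\vartheta^m-\theta^\circ\|^2> b_m+3\bar\sigma_m+\tfrac32 m\,\sigma_{(m)}+4r_m\Big)\le 2\exp(-m/36),$$ $$\mathbb E_{\theta^\circ}P_{\vartheta^m|Y}\Big(\|\vartheta^m-\theta^\circ\|^2< b_m+\bar\sigma_m-4c\,(m\,\sigma_{(m)}+r_m)\Big)\le 2\exp(-c^2m/2).$$
   Context: Let $\ell^2$ be the space of square-summable real sequences with norm $\|\cdot\|$. Fix a bounded real sequence $\lambda=(\lambda_j)_{j\ge1}$ with $\lambda_j\ne0$ for all $j$, a noise level $\epsilon\in(0,1)$ and a true parameter $\theta^\circ\in\ell^2$. The data $Y=(Y_j)_{j\ge1}$ satisfy $Y_j=\lambda_j\theta^\circ_j+\sqrt\epsilon\,\xi_j$ with $\xi_j$ i.i.d. $N(0,1)$; $\mathbb E_{\theta^\circ}$, $P_{\theta^\circ}$ denote expectation and probability under this law. Fix prior means $\eta=(\eta_j)_{j\ge1}$ with $\theta^\circ-\eta\in\ell^2$ and prior variances $\tau_j\in(0,\infty)$ (possibly depending on $\epsilon$). For $m\in\mathbb N$ the sieve prior $P_{\vartheta^m}$ is the law of $\vartheta^m=(\vartheta^m_j)_{j\ge1}$ with independent coordinates, $\vartheta^m_j\sim N(\eta_j,\tau_j)$ for $j\le m$ and $\vartheta^m_j=\eta_j$ a.s. for $j>m$, in the model $Y_j=\lambda_j\vartheta^m_j+\sqrt\epsilon\xi_j$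 with $\vartheta^m$ independent of $(\xi_j)$. Put $\sigma_j:=(\lambda_j^2\epsilon^{-1}+\tau_j^{-1})^{-1}$ and $\theta^Y_j:=\sigma_j(\tau_j^{-1}\eta_j+\lambda_j\epsilon^{-1}Y_j)$. The posterior $P_{\vartheta^m|Y}$ makes the coordinates independent with $\vartheta^m_j\sim N(\theta^Y_j,\sigma_j)$ for $j\le m$ and $\vartheta^m_j=\eta_j$ for $j>m$; the Bayes estimator is $\hat\theta^m:=\mathbb E[\vartheta^m|Y]$, i.e. $\hat\theta^m_j=\theta^Y_j$ for $j\le m$, $\hat\theta^m_j=\eta_j$ for $j>m$. Define $b_m:=\sum_{j>m}(\theta^\circ_j-\eta_j)^2$, $\bar\sigma_m:=\sum_{j=1}^m\sigma_j$, $\sigma_{(m)}:=\max_{1\le j\le m}\sigma_j$, $r_m:=\sum_{j=1}^m\sigma_j^2\tau_j^{-2}(\eta_j-\theta^\circ_j)^2$. *)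

theory Defs
  imports "HOL-Probability.Probability"
begin

text \<open>Sequences are indexed from 0: coordinate j of the paper corresponds to j-1 here,
so the first m coordinates are the indices in {..<m}.\<close>

definition post_var :: "(nat \<Rightarrow> real) \<Rightarrow> real \<Rightarrow> (nat \<Rightarrow> real) \<Rightarrow> nat \<Rightarrow> real" where
  "post_var lam eps tau j = inverse ((lam j)\<^sup>2 / eps + inverse (tau j))"

definition post_mean :: "(nat \<Rightarrow> real) \<Rightarrow> real \<Rightarrow> (nat \<Rightarrow> real) \<Rightarrow> (nat \<Rightarrow> real)
    \<Rightarrow> (nat \<Rightarrow> real) \<Rightarrow> nat \<Rightarrow> real" where
  "post_mean lam eps tau eta Y j =
     post_var lam eps tau j * (eta j / tau j + lam j * Y j / eps)"

definition data_law :: "(nat \<Rightarrow> real) \<Rightarrow> real \<Rightarrow> (nat \<Rightarrow> real) \<Rightarrow> (nat \<Rightarrow> real) measure" where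
  "data_law lam eps th =
     distr (PiM UNIV (\<lambda>_. density lborel std_normal_density)) (PiM UNIV (\<lambda>_. borel))
       (\<lambda>xi j. lam j * th j + sqrt eps * xi j)"

text \<open>Posterior of the sieve prior with m free coordinates given data Y.
  normal_density takes the standard deviation, hence the square root of the variance.\<close>
definition sieve_posterior :: "nat \<Rightarrow> (nat \<Rightarrow> real) \<Rightarrow> real \<Rightarrow> (nat \<Rightarrow> real) \<Rightarrow> (nat \<Rightarrow> real)
    \<Rightarrow> (nat \<Rightarrow> real) \<Rightarrow> (nat \<Rightarrow> real) measure" where
  "sieve_posterior m lam eps tau eta Y =
     PiM UNIV (\<lambda>j. if j < m
        then density lborel (normal_density (post_mean lam eps tau eta Y j) (sqrt (post_var lam eps tau j)))
        else return borel (eta j))"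

definition sq_norm :: "(nat \<Rightarrow> real) \<Rightarrow> real" where
  "sq_norm x = (\<Sum>j. (x j)\<^sup>2)"

definition bias :: "nat \<Rightarrow> (nat \<Rightarrow> real) \<Rightarrow> (nat \<Rightarrow> real) \<Rightarrow> real" where
  "bias m th eta = (\<Sum>j. (th (j + m) - eta (j + m))\<^sup>2)"

definition sigma_bar :: "nat \<Rightarrow> (nat \<Rightarrow> real) \<Rightarrow> real \<Rightarrow> (nat \<Rightarrow> real) \<Rightarrow> real" where
  "sigma_bar m lam eps tau = (\<Sum>j<m. post_var lam eps tau j)"

definition sigma_max :: "nat \<Rightarrow> (nat \<Rightarrow> real) \<Rightarrow> real \<Rightarrow> (nat \<Rightarrow> real) \<Rightarrow> real" where
  "sigma_max m lam eps tau = Max (post_var lam eps tau ` {..<m})"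

definition r_term :: "nat \<Rightarrow> (nat \<Rightarrow> real) \<Rightarrow> real \<Rightarrow> (nat \<Rightarrow> real) \<Rightarrow> (nat \<Rightarrow> real)
    \<Rightarrow> (nat \<Rightarrow> real) \<Rightarrow> real" where
  "r_term m lam eps tau eta th =
     (\<Sum>j<m. (post_var lam eps tau j)\<^sup>2 / (tau j)\<^sup>2 * (eta j - th j)\<^sup>2)"

end

theory Submission
  imports Defs
begin

text \<open>Chernoff's method. Given \<open>Y\<close> the posterior coordinates are independent Gaussians, so for
  \<open>2 t \<sigma>\<^sub>j < 1\<close> the posterior moment generating function of \<open>\<parallel>\<vartheta>\<^sup>m - \<theta>\<degree>\<parallel>\<^sup>2 - b\<^sub>m\<close> is a product of
  the quantities \<open>E exp (t X\<^sup>2)\<close>, \<open>X \<sim> N(\<theta>\<^sup>Y\<^sub>j - \<theta>\<degree>\<^sub>j, \<sigma>\<^sub>j)\<close>. Each factor is again a Gaussian-square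
  exponential in \<open>\<theta>\<^sup>Y\<^sub>j - \<theta>\<degree>\<^sub>j\<close>, which is itself Gaussian under \<open>P\<^sub>\<theta>\<degree>\<close>; integrating out the data
  therefore just adds the variance \<open>\<sigma>\<^sub>j\<^sup>2 \<lambda>\<^sub>j\<^sup>2 / \<epsilon>\<close>. Elementary bounds on the resulting factors with
  \<open>t = 1 / (8 S)\<close> and \<open>t = -c / S\<close>, \<open>S\<close> the largest of the \<open>\<sigma>\<^sub>j\<close>, give the two tails, in fact with
  the sharper bounds \<open>exp (-m/16)\<close> and \<open>exp (-2 c\<^sup>2 m)\<close>.\<close>

text \<open>\<open>sq_normal_mgf v a t = E exp (t X\<^sup>2)\<close> for \<open>X \<sim> N(a, v)\<close>, finite when \<open>2 t v < 1\<close>.\<close>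
definition sq_normal_mgf :: "real \<Rightarrow> real \<Rightarrow> real \<Rightarrow> real" where
  "sq_normal_mgf v a t = exp (t * a\<^sup>2 / (1 - 2 * t * v)) / sqrt (1 - 2 * t * v)"

lemma sq_normal_mgf_nonneg: "2 * t * v < 1 \<Longrightarrow> 0 \<le> sq_normal_mgf v a t"
  unfolding sq_normal_mgf_def by simp

lemma normal_density_mult_exp_square:
  fixes \<mu> \<sigma> k c x :: real
  assumes \<sigma>: "0 < \<sigma>" and k: "2*k*\<sigma>\<^sup>2 < 1"
  defines "d \<equiv> 1 - 2*k*\<sigma>\<^sup>2"
  shows "normal_density \<mu> \<sigma> x * exp (k*(x-c)\<^sup>2) =
    sq_normal_mgf (\<sigma>\<^sup>2) (\<mu> - c) k * normal_density ((\<mu> - 2*k*\<sigma>\<^sup>2*c) / d) (\<sigma> / sqrt d) x"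
proof -
  have d0: "0 < d" using k by (simp add: d_def)
  have square: "-(x - \<mu>)\<^sup>2 / (2*\<sigma>\<^sup>2) + k*(x-c)\<^sup>2 =
      k*(\<mu>-c)\<^sup>2/d - (x - (\<mu> - 2*k*\<sigma>\<^sup>2*c)/d)\<^sup>2 / (2*(\<sigma>/sqrt d)\<^sup>2)"
  proof -
    define A where "A = 2*\<sigma>\<^sup>2"
    have A0: "0 < A" using \<sigma> by (simp add: A_def)
    have k: "k = (1-d)/A" and kA: "2*k*\<sigma>\<^sup>2 = 1-d" using A0 by (simp_all add: A_def d_def field_simps)
    have "-(x - \<mu>)\<^sup>2/A + (1-d)/A*(x-c)\<^sup>2 = (1-d)/A*(\<mu>-c)\<^sup>2/d - (x - (\<mu> - (1-d)*c)/d)\<^sup>2/(A/d)"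
      using A0 d0 by (simp add: field_simps) (simp add: power2_eq_square algebra_simps)
    moreover have "2*(\<sigma>/sqrt d)\<^sup>2 = A/d" using d0 by (simp add: A_def power_divide)
    ultimately show ?thesis unfolding kA by (simp add: A_def k)
  qed
  have "sqrt (2*pi*(\<sigma>/sqrt d)\<^sup>2) = sqrt (2*pi*\<sigma>\<^sup>2) / sqrt d"
    using d0 by (simp add: real_sqrt_divide power_divide real_sqrt_mult)
  then show ?thesis
    unfolding normal_density_def sq_normal_mgf_def d_def[symmetric]
    using d0 by (simp add: mult_exp_exp flip: square)
qed

lemma nn_integral_normal_exp_square:
  fixes \<mu> \<sigma> k c :: real
  assumes \<sigma>: "0 < \<sigma>" and d: "2*k*\<sigma>\<^sup>2 < 1"
  shows "(\<integral>\<^sup>+x. exp (k*(x-c)\<^sup>2) \<partial>density lborel (normal_density \<mu> \<sigma>)) = sq_normal_mgf (\<sigma>\<^sup>2) (\<mu> - c) k"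
proof -
  define d where "d = 1 - 2*k*\<sigma>\<^sup>2"
  define \<mu>' where "\<mu>' = (\<mu> - 2*k*\<sigma>\<^sup>2*c) / d"
  define \<sigma>' where "\<sigma>' = \<sigma> / sqrt d"
  have "0 < \<sigma>'" using \<sigma> d by (simp add: \<sigma>'_def d_def)
  then interpret prob_space "density lborel (normal_density \<mu>' \<sigma>')"
    by (rule prob_space_normal_density)
  have "(\<integral>\<^sup>+x. exp (k*(x-c)\<^sup>2) \<partial>density lborel (normal_density \<mu> \<sigma>))
      = (\<integral>\<^sup>+x. ennreal (normal_density \<mu> \<sigma> x * exp (k*(x-c)\<^sup>2)) \<partial>lborel)"
    by (subst nn_integral_density) (auto simp: ennreal_mult)
  also have "\<dots> = (\<integral>\<^sup>+x. sq_normal_mgf (\<sigma>\<^sup>2) (\<mu> - c) k * ennreal (normal_density \<mu>' \<sigma>' x) \<partial>lborel)"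
    using normal_density_mult_exp_square[OF \<sigma> d] sq_normal_mgf_nonneg[OF d]
    by (simp add: \<mu>'_def \<sigma>'_def d_def ennreal_mult)
  also have "\<dots> = sq_normal_mgf (\<sigma>\<^sup>2) (\<mu> - c) k * emeasure (density lborel (normal_density \<mu>' \<sigma>')) UNIV"
    by (simp add: nn_integral_cmult emeasure_density)
  finally show ?thesis using emeasure_space_1 by simp
qed

lemma nn_integral_std_normal_sq_normal_mgf:
  fixes v w a t :: real
  assumes w: "w \<noteq> 0" and v: "2 * t * v < 1" and vw: "2 * t * (v + w\<^sup>2) < 1"
  shows "(\<integral>\<^sup>+x. sq_normal_mgf v (w*x + a) t \<partial>density lborel std_normal_density) = sq_normal_mgf (v + w\<^sup>2) a t"
proof -
  define d where "d = 1 - 2 * t * v"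
  define k where "k = t*w\<^sup>2/d"
  have d0: "0 < d" using v by (simp add: d_def)
  have k: "2*k*1\<^sup>2 < 1" using d0 vw by (simp add: k_def d_def field_simps)
  have "sq_normal_mgf v (w*x + a) t = 1 / sqrt d * exp (k*(x - (-a/w))\<^sup>2)" for x
  proof -
    have "t*(w*x + a)\<^sup>2/d = k*(x - (-a/w))\<^sup>2"
      using w d0 by (simp add: k_def field_simps power2_eq_square)
    then show ?thesis by (simp add: sq_normal_mgf_def d_def)
  qed
  then have "(\<integral>\<^sup>+x. sq_normal_mgf v (w*x + a) t \<partial>density lborel std_normal_density)
      = (\<integral>\<^sup>+x. ennreal (1 / sqrt d) * exp (k*(x - (-a/w))\<^sup>2) \<partial>density lborel std_normal_density)"
    using d0 by (intro nn_integral_cong) (simp add: ennreal_mult[symmetric])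
  also have "\<dots> = 1 / sqrt d * (\<integral>\<^sup>+x. exp (k*(x - (-a/w))\<^sup>2) \<partial>density lborel std_normal_density)"
    by (rule nn_integral_cmult) auto
  also have "\<dots> = ennreal (1 / sqrt d * sq_normal_mgf 1 (a/w) k)"
    using nn_integral_normal_exp_square[of 1 k 0 "-a/w"] k sq_normal_mgf_nonneg[of k 1]
    using d0 by (simp add: ennreal_mult divide_inverse_commute)
  also have "1 / sqrt d * sq_normal_mgf 1 (a/w) k = sq_normal_mgf (v + w\<^sup>2) a t"
  proof -
    have "1 - 2*k = (1 - 2 * t * (v + w\<^sup>2)) / d" using d0 by (simp add: k_def d_def field_simps)
    then show ?thesis
      using d0 vw w by (simp add: sq_normal_mgf_def real_sqrt_divide) (simp add: k_def field_simps)
  qed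
  finally show ?thesis .
qed

lemma nn_integral_PiM_prod_lessThan:
  fixes M :: "nat \<Rightarrow> 'a measure" and f :: "nat \<Rightarrow> 'a \<Rightarrow> ennreal"
  assumes M: "\<And>i. prob_space (M i)" and f: "\<And>i. i < m \<Longrightarrow> f i \<in> borel_measurable (M i)"
  shows "(\<integral>\<^sup>+v. (\<Prod>j<m. f j (v j)) \<partial>PiM UNIV M) = (\<Prod>j<m. \<integral>\<^sup>+x. f j x \<partial>M j)"
proof -
  interpret product_prob_space M UNIV
    by (simp add: product_prob_space_def product_prob_space_axioms_def product_sigma_finite_def
        M prob_space_imp_sigma_finite)
  have meas: "(\<lambda>w. \<Prod>j<m. f j (w j)) \<in> borel_measurable (PiM {..<m} M)"
    using f by (intro borel_measurable_prod_ennreal) (auto intro: measurable_compose[OF measurable_component_singleton])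
  have "(\<Prod>j<m. \<integral>\<^sup>+x. f j x \<partial>M j) = (\<integral>\<^sup>+w. (\<Prod>j<m. f j (w j)) \<partial>PiM {..<m} M)"
    using f by (intro product_nn_integral_prod[symmetric]) auto
  also have "\<dots> = (\<integral>\<^sup>+w. (\<Prod>j<m. f j (w j)) \<partial>distr (PiM UNIV M) (PiM {..<m} M) (\<lambda>v. restrict v {..<m}))"
    by (subst distr_PiM_restrict_finite) auto
  also have "\<dots> = (\<integral>\<^sup>+v. (\<Prod>j<m. f j (restrict v {..<m} j)) \<partial>PiM UNIV M)"
    by (rule nn_integral_distr) (auto simp: meas)
  also have "\<dots> = (\<integral>\<^sup>+v. (\<Prod>j<m. f j (v j)) \<partial>PiM UNIV M)"
    by (intro nn_integral_cong prod.cong) auto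
  finally show ?thesis by (rule sym)
qed

lemma prod_ennreal_le_exp_sum:
  fixes f g :: "'a \<Rightarrow> real"
  assumes "\<And>j. j \<in> A \<Longrightarrow> f j \<le> exp (g j)"
  shows "(\<Prod>j\<in>A. ennreal (f j)) \<le> ennreal (exp (sum g A))"
proof (cases "finite A")
  case True
  have "(\<Prod>j\<in>A. ennreal (f j)) \<le> (\<Prod>j\<in>A. ennreal (exp (g j)))"
    using assms by (intro prod_mono_ennreal ennreal_leI)
  also have "\<dots> = ennreal (exp (sum g A))"
    using True by (simp add: prod_ennreal exp_sum)
  finally show ?thesis .
qed simp

lemma sq_normal_mgf_le_exp:
  fixes v a t :: real
  assumes "0 \<le> t" "0 \<le> v" "4 * t * v \<le> 1"
  shows "sq_normal_mgf v a t \<le> exp (2*t*(a\<^sup>2 + v))"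
proof -
  define x where "x = 2 * t * v"
  have x: "0 \<le> x" "x \<le> 1/2" using assms by (auto simp: x_def)
  have "0 \<le> t*a\<^sup>2*(1 - 2*x)" using x assms by simp
  then have exponent: "t*a\<^sup>2/(1-x) \<le> 2*t*a\<^sup>2" using x by (simp add: divide_le_eq algebra_simps)
  have root: "1 \<le> sqrt (1-x) * exp x"
  proof -
    have "0 \<le> x * (1 - 2*x)" using x by simp
    then have "1 \<le> (1-x) * (1 + 2*x)" by (simp add: algebra_simps)
    also have "\<dots> \<le> (1-x) * exp (2*x)" using x by (intro mult_left_mono exp_ge_add_one_self) auto
    also have "\<dots> = (sqrt (1-x) * exp x)\<^sup>2"
      unfolding power_mult_distrib exp_double using x by simp
    finally have "1\<^sup>2 \<le> (sqrt (1-x) * exp x)\<^sup>2" by simp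
    then show ?thesis by (rule power2_le_imp_le) (use x in simp)
  qed
  have s: "0 < sqrt (1-x)" using x by simp
  have "exp (t*a\<^sup>2/(1-x)) / sqrt (1-x) \<le> exp (2*t*a\<^sup>2) / sqrt (1-x)"
    using exponent s by (intro divide_right_mono) auto
  also have "\<dots> \<le> exp (2*t*a\<^sup>2) * exp x"
    using mult_left_mono[OF root, of "exp (2*t*a\<^sup>2)"] s by (simp add: divide_le_eq algebra_simps)
  finally have "exp (t*a\<^sup>2/(1-x)) / sqrt (1-x) \<le> exp (2*t*a\<^sup>2) * exp x" .
  then show ?thesis by (simp add: sq_normal_mgf_def x_def mult_exp_exp algebra_simps)
qed

lemma sq_normal_mgf_le_exp_of_nonpos:
  fixes v a t x :: real
  assumes "t \<le> 0" "0 \<le> x" "x \<le> 1" "x \<le> -2 * t * v"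
  shows "sq_normal_mgf v a t \<le> exp (-(x - x\<^sup>2)/2)"
proof -
  define z where "z = -2 * t * v"
  have z: "x \<le> z" "1 - 2 * t * v = 1 + z" using assms by (simp_all add: z_def)
  have s: "0 < sqrt (1 + z)" using assms z by simp
  have "exp (x - x\<^sup>2) \<le> 1 + x"
    using ln_one_plus_pos_lower_bound[of x] assms by (simp add: ln_ge_iff)
  also have "\<dots> \<le> 1 + z" using z by simp
  also have "\<dots> = (sqrt (1 + z))\<^sup>2" using assms z by simp
  also have "exp (x - x\<^sup>2) = (exp ((x - x\<^sup>2)/2))\<^sup>2" by (subst exp_double[symmetric]) simp
  finally have "(exp ((x - x\<^sup>2)/2))\<^sup>2 \<le> (sqrt (1 + z))\<^sup>2" .
  then have root: "exp ((x - x\<^sup>2)/2) \<le> sqrt (1 + z)" by (rule power2_le_imp_le) (use s in simp)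
  have "t * a\<^sup>2 / (1 + z) \<le> 0"
    using assms z by (intro divide_nonpos_pos mult_nonpos_nonneg) auto
  then have "sq_normal_mgf v a t \<le> 1 / sqrt (1 + z)"
    unfolding sq_normal_mgf_def z(2) using s by (intro divide_right_mono) auto
  also have "\<dots> \<le> 1 / exp ((x - x\<^sup>2)/2)" using root s by (intro divide_left_mono) auto
  also have "\<dots> = exp (-(x - x\<^sup>2)/2)" by (metis exp_minus inverse_eq_divide minus_divide_left)
  finally show ?thesis .
qed

text \<open>Under \<open>data_law\<close> the posterior mean satisfies \<open>\<theta>\<^sup>Y\<^sub>j - \<theta>\<^sub>j \<sim> N(post_bias j, \<sigma>\<^sub>j\<^sup>2 \<lambda>\<^sub>j\<^sup>2 / \<epsilon>)\<close>,
  so a posterior draw has \<open>\<vartheta>\<^sub>j - \<theta>\<^sub>j \<sim> N(post_bias j, marginal_var j)\<close> jointly over data and posterior.\<close>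
definition marginal_var :: "(nat \<Rightarrow> real) \<Rightarrow> real \<Rightarrow> (nat \<Rightarrow> real) \<Rightarrow> nat \<Rightarrow> real" where
  "marginal_var lam eps tau j = post_var lam eps tau j + (post_var lam eps tau j)\<^sup>2 * (lam j)\<^sup>2 / eps"

definition post_bias :: "(nat \<Rightarrow> real) \<Rightarrow> real \<Rightarrow> (nat \<Rightarrow> real) \<Rightarrow> (nat \<Rightarrow> real) \<Rightarrow> (nat \<Rightarrow> real)
    \<Rightarrow> nat \<Rightarrow> real" where
  "post_bias lam eps tau eta th j = post_var lam eps tau j * (eta j - th j) / tau j"

lemma post_var_pos: "0 < eps \<Longrightarrow> 0 < tau j \<Longrightarrow> 0 < post_var lam eps tau j"
  unfolding post_var_def by (simp add: add_nonneg_pos)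

lemma post_var_le_marginal_var: "0 < eps \<Longrightarrow> post_var lam eps tau j \<le> marginal_var lam eps tau j"
  unfolding marginal_var_def by simp

lemma marginal_var_le_twice_post_var:
  assumes "0 < eps" "0 < tau j"
  shows "marginal_var lam eps tau j \<le> 2 * post_var lam eps tau j"
proof -
  define L where "L = (lam j)\<^sup>2 / eps"
  have "0 < eps + tau j * (lam j)\<^sup>2" using assms by (simp add: add_pos_nonneg)
  then have "post_var lam eps tau j * L \<le> 1"
    using assms by (simp add: post_var_def L_def field_simps)
  then have "post_var lam eps tau j * (post_var lam eps tau j * L) \<le> post_var lam eps tau j"
    using post_var_pos[of eps tau j lam, OF assms] by (simp add: mult_left_le)
  then show ?thesis by (simp add: marginal_var_def L_def power2_eq_square)
qed

lemma post_var_mgf_domain: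
  assumes "0 < eps" "0 < tau j" "2 * t * marginal_var lam eps tau j < 1"
  shows "2 * t * post_var lam eps tau j < 1"
proof (cases "0 \<le> t")
  case True
  then show ?thesis
    using assms mult_left_mono[OF post_var_le_marginal_var[OF assms(1)], of "2*t" lam tau j] by simp
next
  case False
  then have "t * post_var lam eps tau j < 0"
    using post_var_pos[of eps tau j lam, OF assms(1,2)] by (simp add: mult_neg_pos)
  then show ?thesis by simp
qed

lemma r_term_eq_sum_post_bias:
  "r_term m lam eps tau eta th = (\<Sum>j<m. (post_bias lam eps tau eta th j)\<^sup>2)"
  unfolding r_term_def post_bias_def
  by (intro sum.cong) (auto simp: power_divide power_mult_distrib power2_commute[of "eta _"])

lemma prob_space_sieve_posterior_factor:
  assumes "0 < eps" "0 < tau j"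
  shows "prob_space (if j < m
      then density lborel (normal_density (post_mean lam eps tau eta Y j) (sqrt (post_var lam eps tau j)))
      else return borel (eta j))"
  using post_var_pos[of eps tau j lam, OF assms] by (auto intro: prob_space_normal_density prob_space_return)

lemma AE_sieve_posterior_tail:
  assumes "0 < eps" "\<And>j. 0 < tau j"
  shows "AE v in sieve_posterior m lam eps tau eta Y. \<forall>j. m \<le> j \<longrightarrow> v j = eta j"
proof -
  define M where "M j = (if j < m
      then density lborel (normal_density (post_mean lam eps tau eta Y j) (sqrt (post_var lam eps tau j)))
      else return borel (eta j))" for j
  have "prob_space (M j)" for j
    unfolding M_def using assms by (rule prob_space_sieve_posterior_factor)
  then interpret product_prob_space M UNIV
    by (simp add: product_prob_space_def product_prob_space_axioms_def product_sigma_finite_def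
        prob_space_imp_sigma_finite)
  have "AE v in PiM UNIV M. m \<le> j \<longrightarrow> v j = eta j" for j
  proof (cases "m \<le> j")
    case True
    then have "M j = return borel (eta j)" by (simp add: M_def)
    moreover have "AE x in return borel (eta j). x = eta j" by (subst AE_return) auto
    ultimately have "AE x in M j. x = eta j" by metis
    from AE_component[OF _ this] show ?thesis by simp
  qed simp
  then show ?thesis unfolding sieve_posterior_def M_def[symmetric] AE_all_countable by simp
qed

lemma sq_norm_eq_bias_add_sum:
  assumes "summable (\<lambda>j. (th j - eta j)\<^sup>2)" and "\<forall>j. m \<le> j \<longrightarrow> v j = eta j"
  shows "sq_norm (\<lambda>j. v j - th j) = bias m th eta + (\<Sum>j<m. (v j - th j)\<^sup>2)"
proof -
  have tail: "(\<lambda>j. (v (j+m) - th (j+m))\<^sup>2) = (\<lambda>j. (th (j+m) - eta (j+m))\<^sup>2)"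
    using assms(2) by (auto simp: power2_commute)
  have "summable (\<lambda>j. (th (j+m) - eta (j+m))\<^sup>2)"
    using assms(1) by (subst summable_iff_shift)
  then have "summable (\<lambda>j. (v j - th j)\<^sup>2)"
    by (subst summable_iff_shift[symmetric, of _ m]) (simp only: tail)
  from suminf_split_initial_segment[OF this, of m] show ?thesis
    unfolding sq_norm_def bias_def tail by simp
qed

lemma nn_integral_sieve_posterior_prod_exp:
  assumes eps: "0 < eps" and tau: "\<And>j. 0 < tau j"
    and dom: "\<And>j. j < m \<Longrightarrow> 2 * t * post_var lam eps tau j < 1"
  shows "(\<integral>\<^sup>+v. (\<Prod>j<m. ennreal (exp (t * (v j - th j)\<^sup>2))) \<partial>sieve_posterior m lam eps tau eta Y)
    = (\<Prod>j<m. ennreal (sq_normal_mgf (post_var lam eps tau j) (post_mean lam eps tau eta Y j - th j) t))"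
proof -
  have factor: "(\<integral>\<^sup>+x. exp (t * (x - th j)\<^sup>2)
      \<partial>density lborel (normal_density (post_mean lam eps tau eta Y j) (sqrt (post_var lam eps tau j))))
    = sq_normal_mgf (post_var lam eps tau j) (post_mean lam eps tau eta Y j - th j) t" if "j < m" for j
  proof -
    have "0 < sqrt (post_var lam eps tau j)" "2 * t * (sqrt (post_var lam eps tau j))\<^sup>2 < 1"
      using post_var_pos[of eps tau j lam, OF eps tau] dom[OF that] by simp_all
    from nn_integral_normal_exp_square[OF this] show ?thesis
      using post_var_pos[of eps tau j lam, OF eps tau] by simp
  qed
  show ?thesis
    unfolding sieve_posterior_def
    by (subst nn_integral_PiM_prod_lessThan[OF prob_space_sieve_posterior_factor[of eps tau _ m lam eta Y, OF eps tau]])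
      (auto intro!: prod.cong simp: factor)
qed

lemma sieve_posterior_chernoff:
  assumes eps: "0 < eps" and tau: "\<And>j. 0 < tau j" and th_eta: "summable (\<lambda>j. (th j - eta j)\<^sup>2)"
    and dom: "\<And>j. j < m \<Longrightarrow> 2 * t * post_var lam eps tau j < 1"
    and R: "\<And>x. R x \<Longrightarrow> 0 \<le> t * (x - bias m th eta - K)"
  shows "emeasure (sieve_posterior m lam eps tau eta Y)
      {v \<in> space (sieve_posterior m lam eps tau eta Y). R (sq_norm (\<lambda>j. v j - th j))}
    \<le> exp (-t*K) *
      (\<Prod>j<m. ennreal (sq_normal_mgf (post_var lam eps tau j) (post_mean lam eps tau eta Y j - th j) t))"
    (is "emeasure ?P ?A \<le> _")
proof (cases "?A \<in> sets ?P")
  case True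
  have "emeasure ?P ?A = (\<integral>\<^sup>+v. indicator ?A v \<partial>?P)"
    using True by simp
  also have "\<dots> \<le> (\<integral>\<^sup>+v. exp (-t*K) * (\<Prod>j<m. ennreal (exp (t * (v j - th j)\<^sup>2))) \<partial>?P)"
  proof (rule nn_integral_mono_AE)
    show "AE v in ?P. indicator ?A v \<le> exp (-t*K) * (\<Prod>j<m. ennreal (exp (t * (v j - th j)\<^sup>2)))"
      using AE_sieve_posterior_tail[OF eps tau]
    proof eventually_elim
      case (elim v)
      then have "sq_norm (\<lambda>j. v j - th j) = bias m th eta + (\<Sum>j<m. (v j - th j)\<^sup>2)"
        by (rule sq_norm_eq_bias_add_sum[OF th_eta])
      then have "v \<in> ?A \<Longrightarrow> 1 \<le> exp (t * ((\<Sum>j<m. (v j - th j)\<^sup>2) - K))"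
        using R by fastforce
      then show ?case
        by (auto simp: indicator_def prod_ennreal exp_sum[symmetric] sum_distrib_left
            ennreal_mult[symmetric] mult_exp_exp algebra_simps)
    qed
  qed
  also have "\<dots> = exp (-t*K) * (\<integral>\<^sup>+v. (\<Prod>j<m. ennreal (exp (t * (v j - th j)\<^sup>2))) \<partial>?P)"
    by (rule nn_integral_cmult)
      (auto intro!: borel_measurable_prod_ennreal measurable_compose[OF measurable_component_singleton] simp: sieve_posterior_def)
  finally show ?thesis
    by (simp add: nn_integral_sieve_posterior_prod_exp[OF eps tau dom])
qed (simp add: emeasure_notin_sets)

lemma post_mean_data_affine:
  assumes eps: "0 < eps" and tau: "0 < tau j"
  shows "post_mean lam eps tau eta (\<lambda>j. lam j * th j + sqrt eps * xi j) j - th j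
    = post_var lam eps tau j * lam j / sqrt eps * xi j + post_bias lam eps tau eta th j"
proof -
  define p where "p = post_var lam eps tau j"
  define r where "r = sqrt eps"
  have r: "0 < r" "eps = r\<^sup>2" using eps by (simp_all add: r_def)
  have "0 < (lam j)\<^sup>2 / r\<^sup>2 + 1 / tau j" using tau by (simp add: add_nonneg_pos)
  then have "p * ((lam j)\<^sup>2 / r\<^sup>2 + 1 / tau j) = 1"
    using r by (simp add: p_def post_var_def inverse_eq_divide)
  then have key: "p * (lam j)\<^sup>2 * tau j = r\<^sup>2 * (tau j - p)"
    using r tau by (simp add: field_simps)
  have "p * (eta j / tau j + lam j * (lam j * th j + r * xi j) / r\<^sup>2) - th j
      = p * lam j / r * xi j + p * (eta j - th j) / tau j"
    using r tau by (simp add: field_simps power2_eq_square) (use key in algebra)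
  then show ?thesis
    by (simp add: post_mean_def post_bias_def p_def r_def[symmetric] r(2)[symmetric])
qed

lemma nn_integral_data_law_prod:
  assumes g: "\<And>j. j < m \<Longrightarrow> g j \<in> borel_measurable borel"
  shows "(\<integral>\<^sup>+Y. (\<Prod>j<m. g j (Y j)) \<partial>data_law lam eps th)
    = (\<Prod>j<m. \<integral>\<^sup>+x. g j (lam j * th j + sqrt eps * x) \<partial>density lborel std_normal_density)"
proof -
  have T: "(\<lambda>xi j. lam j * th j + sqrt eps * xi j)
      \<in> measurable (PiM UNIV (\<lambda>_. density lborel std_normal_density)) (PiM UNIV (\<lambda>_. borel))"
  proof (rule measurable_PiM_single')
    show "(\<lambda>xi. lam j * th j + sqrt eps * xi j) \<in> borel_measurable (PiM UNIV (\<lambda>_. density lborel std_normal_density))"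
      for j by measurable
  qed auto
  have "(\<lambda>Y. \<Prod>j<m. g j (Y j)) \<in> borel_measurable (PiM UNIV (\<lambda>_. borel))"
    using g by (intro borel_measurable_prod_ennreal) (auto intro: measurable_compose[OF measurable_component_singleton])
  then have "(\<integral>\<^sup>+Y. (\<Prod>j<m. g j (Y j)) \<partial>data_law lam eps th)
      = (\<integral>\<^sup>+xi. (\<Prod>j<m. g j (lam j * th j + sqrt eps * xi j)) \<partial>PiM UNIV (\<lambda>_. density lborel std_normal_density))"
    unfolding data_law_def by (simp add: nn_integral_distr[OF T])
  also have "\<dots> = (\<Prod>j<m. \<integral>\<^sup>+x. g j (lam j * th j + sqrt eps * x) \<partial>density lborel std_normal_density)"
    using g by (intro nn_integral_PiM_prod_lessThan[where f = "\<lambda>j x. g j (lam j * th j + sqrt eps * x)"])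
      (auto intro: prob_space_normal_density)
  finally show ?thesis .
qed

lemma nn_integral_data_law_prod_sq_normal_mgf:
  assumes lam_nz: "\<And>j. lam j \<noteq> 0" and eps: "0 < eps" and tau: "\<And>j. 0 < tau j"
    and dom: "\<And>j. j < m \<Longrightarrow> 2 * t * marginal_var lam eps tau j < 1"
  shows "(\<integral>\<^sup>+Y. (\<Prod>j<m. ennreal (sq_normal_mgf (post_var lam eps tau j) (post_mean lam eps tau eta Y j - th j) t))
      \<partial>data_law lam eps th)
    = (\<Prod>j<m. ennreal (sq_normal_mgf (marginal_var lam eps tau j) (post_bias lam eps tau eta th j) t))"
proof -
  define g where "g j y = ennreal (sq_normal_mgf (post_var lam eps tau j)
      (post_var lam eps tau j * (eta j / tau j + lam j * y / eps) - th j) t)" for j y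
  have "(\<integral>\<^sup>+x. g j (lam j * th j + sqrt eps * x) \<partial>density lborel std_normal_density)
      = sq_normal_mgf (marginal_var lam eps tau j) (post_bias lam eps tau eta th j) t" if "j < m" for j
  proof -
    define w where "w = post_var lam eps tau j * lam j / sqrt eps"
    have "w \<noteq> 0" "2 * t * post_var lam eps tau j < 1" "2 * t * (post_var lam eps tau j + w\<^sup>2) < 1"
      using lam_nz[of j] post_var_pos[of eps tau j lam, OF eps tau] post_var_mgf_domain[OF eps tau dom[OF that]]
        dom[OF that] eps
      by (auto simp: w_def marginal_var_def power_divide power_mult_distrib)
    from nn_integral_std_normal_sq_normal_mgf[OF this] show ?thesis
      using post_mean_data_affine[of eps tau j lam eta th "\<lambda>_. x" for x, OF eps tau] eps
      by (simp add: g_def w_def post_mean_def marginal_var_def power_divide power_mult_distrib)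
  qed
  moreover have "g j \<in> borel_measurable borel" for j
    unfolding g_def sq_normal_mgf_def by measurable
  then have "(\<integral>\<^sup>+Y. (\<Prod>j<m. g j (Y j)) \<partial>data_law lam eps th)
      = (\<Prod>j<m. \<integral>\<^sup>+x. g j (lam j * th j + sqrt eps * x) \<partial>density lborel std_normal_density)"
    by (rule nn_integral_data_law_prod)
  ultimately show ?thesis by (simp add: g_def post_mean_def)
qed

lemma sieve_posterior_risk_chernoff:
  assumes lam_nz: "\<And>j. lam j \<noteq> 0" and eps: "0 < eps" and tau: "\<And>j. 0 < tau j"
    and th_eta: "summable (\<lambda>j. (th j - eta j)\<^sup>2)"
    and dom: "\<And>j. j < m \<Longrightarrow> 2 * t * marginal_var lam eps tau j < 1"
    and R: "\<And>x. R x \<Longrightarrow> 0 \<le> t * (x - bias m th eta - K)"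
  shows "(\<integral>\<^sup>+Y. emeasure (sieve_posterior m lam eps tau eta Y)
      {v \<in> space (sieve_posterior m lam eps tau eta Y). R (sq_norm (\<lambda>j. v j - th j))} \<partial>data_law lam eps th)
    \<le> exp (-t*K) * (\<Prod>j<m. ennreal (sq_normal_mgf (marginal_var lam eps tau j) (post_bias lam eps tau eta th j) t))"
proof -
  have dom_post: "2 * t * post_var lam eps tau j < 1" if "j < m" for j
    using post_var_mgf_domain[OF eps tau dom[OF that]] .
  have "(\<integral>\<^sup>+Y. emeasure (sieve_posterior m lam eps tau eta Y)
      {v \<in> space (sieve_posterior m lam eps tau eta Y). R (sq_norm (\<lambda>j. v j - th j))} \<partial>data_law lam eps th)
    \<le> (\<integral>\<^sup>+Y. exp (-t*K) *
      (\<Prod>j<m. ennreal (sq_normal_mgf (post_var lam eps tau j) (post_mean lam eps tau eta Y j - th j) t)) \<partial>data_law lam eps th)"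
    by (intro nn_integral_mono sieve_posterior_chernoff[OF eps tau th_eta dom_post R])
  also have "\<dots> = exp (-t*K) * (\<integral>\<^sup>+Y.
      (\<Prod>j<m. ennreal (sq_normal_mgf (post_var lam eps tau j) (post_mean lam eps tau eta Y j - th j) t)) \<partial>data_law lam eps th)"
    by (rule nn_integral_cmult) (simp add: data_law_def sq_normal_mgf_def post_mean_def)
  finally show ?thesis
    by (simp add: nn_integral_data_law_prod_sq_normal_mgf[OF lam_nz eps tau dom])
qed

lemma sieve_posterior_risk_le_exp:
  assumes lam_nz: "\<And>j. lam j \<noteq> 0" and eps: "0 < eps" and tau: "\<And>j. 0 < tau j"
    and th_eta: "summable (\<lambda>j. (th j - eta j)\<^sup>2)"
    and dom: "\<And>j. j < m \<Longrightarrow> 2 * t * marginal_var lam eps tau j < 1"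
    and R: "\<And>x. R x \<Longrightarrow> 0 \<le> t * (x - bias m th eta - K)"
    and factor: "\<And>j. j < m \<Longrightarrow> sq_normal_mgf (marginal_var lam eps tau j) (post_bias lam eps tau eta th j) t \<le> exp (g j)"
  shows "(\<integral>\<^sup>+Y. emeasure (sieve_posterior m lam eps tau eta Y)
      {v \<in> space (sieve_posterior m lam eps tau eta Y). R (sq_norm (\<lambda>j. v j - th j))} \<partial>data_law lam eps th)
    \<le> exp (-t*K + (\<Sum>j<m. g j))"
proof -
  have "(\<integral>\<^sup>+Y. emeasure (sieve_posterior m lam eps tau eta Y)
      {v \<in> space (sieve_posterior m lam eps tau eta Y). R (sq_norm (\<lambda>j. v j - th j))} \<partial>data_law lam eps th)
    \<le> exp (-t*K) * (\<Prod>j<m. ennreal (sq_normal_mgf (marginal_var lam eps tau j) (post_bias lam eps tau eta th j) t))"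
    by (rule sieve_posterior_risk_chernoff[OF lam_nz eps tau th_eta dom R])
  also have "\<dots> \<le> exp (-t*K) * ennreal (exp (\<Sum>j<m. g j))"
    using factor by (intro mult_left_mono prod_ennreal_le_exp_sum) auto
  finally show ?thesis by (simp add: ennreal_mult[symmetric] mult_exp_exp)
qed

lemma r_term_nonneg: "0 \<le> r_term m lam eps tau eta th"
  unfolding r_term_eq_sum_post_bias by (simp add: sum_nonneg)

lemma sigma_bar_le: "(\<And>j. j < m \<Longrightarrow> post_var lam eps tau j \<le> S) \<Longrightarrow> sigma_bar m lam eps tau \<le> real m * S"
  unfolding sigma_bar_def using sum_bounded_above[of "{..<m}" "post_var lam eps tau" S] by simp

lemma sq_normal_mgf_marginal_var_le_exp:
  assumes eps: "0 < eps" and tau: "0 < tau j" and t: "0 \<le> t" "8 * t * post_var lam eps tau j \<le> 1"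
  shows "sq_normal_mgf (marginal_var lam eps tau j) a t \<le> exp (2*t*(a\<^sup>2 + 2 * post_var lam eps tau j))"
proof -
  have le_twice: "marginal_var lam eps tau j \<le> 2 * post_var lam eps tau j"
    using marginal_var_le_twice_post_var[of eps tau j lam, OF eps tau] .
  have "0 \<le> marginal_var lam eps tau j"
    using post_var_pos[of eps tau j lam, OF eps tau] post_var_le_marginal_var[OF eps, of lam tau j] by simp
  moreover have "4 * t * marginal_var lam eps tau j \<le> 1"
    using t mult_left_mono[OF le_twice, of "4 * t"] by simp
  ultimately have "sq_normal_mgf (marginal_var lam eps tau j) a t \<le> exp (2*t*(a\<^sup>2 + marginal_var lam eps tau j))"
    using t by (intro sq_normal_mgf_le_exp)
  also have "\<dots> \<le> exp (2*t*(a\<^sup>2 + 2 * post_var lam eps tau j))"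
    using t le_twice by (simp add: mult_left_mono)
  finally show ?thesis .
qed

lemma sq_normal_mgf_marginal_var_le_exp_of_nonpos:
  assumes eps: "0 < eps" and tau: "0 < tau j"
    and u: "0 \<le> u" "u * post_var lam eps tau j \<le> c" and c: "c \<le> 1/2"
  shows "sq_normal_mgf (marginal_var lam eps tau j) a (-u) \<le> exp (- u * post_var lam eps tau j + 2 * c\<^sup>2)"
proof -
  define x where "x = 2 * u * post_var lam eps tau j"
  have x: "0 \<le> x" "x \<le> 2 * c"
    using u post_var_pos[of eps tau j lam, OF eps tau] by (simp_all add: x_def)
  have "x \<le> - 2 * (-u) * marginal_var lam eps tau j"
    using u mult_left_mono[OF post_var_le_marginal_var[OF eps, of lam tau j], of "2 * u"] by (simp add: x_def)
  then have "sq_normal_mgf (marginal_var lam eps tau j) a (-u) \<le> exp (-(x - x\<^sup>2)/2)"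
    using u x c by (intro sq_normal_mgf_le_exp_of_nonpos) simp_all
  also have "\<dots> \<le> exp (- u * post_var lam eps tau j + 2 * c\<^sup>2)"
  proof -
    have "x\<^sup>2 \<le> (2 * c)\<^sup>2" using x by (intro power_mono) auto
    then show ?thesis by (simp add: x_def power_mult_distrib)
  qed
  finally show ?thesis .
qed

lemma sieve_posterior_upper_tail:
  assumes lam_nz: "\<And>j. lam j \<noteq> 0" and eps: "0 < eps" and tau: "\<And>j. 0 < tau j"
    and th_eta: "summable (\<lambda>j. (th j - eta j)\<^sup>2)"
    and S: "0 < S" "\<And>j. j < m \<Longrightarrow> post_var lam eps tau j \<le> S"
  shows "(\<integral>\<^sup>+Y. emeasure (sieve_posterior m lam eps tau eta Y)
      {v \<in> space (sieve_posterior m lam eps tau eta Y). sq_norm (\<lambda>j. v j - th j) > bias m th eta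
        + 3 * sigma_bar m lam eps tau + 3/2 * real m * S + 4 * r_term m lam eps tau eta th} \<partial>data_law lam eps th)
    \<le> exp (- real m / 16)"
proof -
  define t where "t = 1 / (8 * S)"
  define K where "K = 3 * sigma_bar m lam eps tau + 3/2 * real m * S + 4 * r_term m lam eps tau eta th"
  have t: "0 < t" using S by (simp add: t_def)
  have sigma: "sigma_bar m lam eps tau \<le> real m * S" by (rule sigma_bar_le) (rule S(2))
  have factor: "sq_normal_mgf (marginal_var lam eps tau j) (post_bias lam eps tau eta th j) t
      \<le> exp (2*t*((post_bias lam eps tau eta th j)\<^sup>2 + 2 * post_var lam eps tau j))" if "j < m" for j
    using t S(2)[OF that] S by (intro sq_normal_mgf_marginal_var_le_exp[of eps tau j, OF eps tau]) (simp_all add: t_def field_simps)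
  have exponent: "-t*K + (\<Sum>j<m. 2*t*((post_bias lam eps tau eta th j)\<^sup>2 + 2 * post_var lam eps tau j))
      \<le> - real m / 16"
  proof -
    have "(\<Sum>j<m. 2*t*((post_bias lam eps tau eta th j)\<^sup>2 + 2 * post_var lam eps tau j))
        = 2*t*r_term m lam eps tau eta th + 4*t* sigma_bar m lam eps tau"
      by (simp add: r_term_eq_sum_post_bias sigma_bar_def sum.distrib sum_distrib_left algebra_simps)
    then have "-t*K + (\<Sum>j<m. 2*t*((post_bias lam eps tau eta th j)\<^sup>2 + 2 * post_var lam eps tau j))
        = t * (sigma_bar m lam eps tau - 3/2 * real m * S - 2 * r_term m lam eps tau eta th)"
      by (simp add: K_def algebra_simps)
    also have "\<dots> \<le> t * (real m * S - 3/2 * real m * S)"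
      using t sigma r_term_nonneg[of m lam eps tau eta th] by (intro mult_left_mono) linarith+
    also have "\<dots> = - real m / 16" using S by (simp add: t_def field_simps)
    finally show ?thesis .
  qed
  have "(\<integral>\<^sup>+Y. emeasure (sieve_posterior m lam eps tau eta Y)
      {v \<in> space (sieve_posterior m lam eps tau eta Y). sq_norm (\<lambda>j. v j - th j) > bias m th eta + K} \<partial>data_law lam eps th)
    \<le> exp (-t*K + (\<Sum>j<m. 2*t*((post_bias lam eps tau eta th j)\<^sup>2 + 2 * post_var lam eps tau j)))"
  proof (rule sieve_posterior_risk_le_exp[OF lam_nz eps tau th_eta _ _ factor])
    show "2 * t * marginal_var lam eps tau j < 1" if "j < m" for j
      using t S(2)[OF that] S marginal_var_le_twice_post_var[of eps tau j lam, OF eps tau]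
      by (simp add: t_def field_simps)
    show "0 \<le> t * (x - bias m th eta - K)" if "bias m th eta + K < x" for x
      using t that by simp
  qed
  also have "\<dots> \<le> exp (- real m / 16)" using exponent by simp
  finally show ?thesis by (simp add: K_def add.assoc)
qed

lemma sieve_posterior_lower_tail:
  assumes lam_nz: "\<And>j. lam j \<noteq> 0" and eps: "0 < eps" and tau: "\<And>j. 0 < tau j"
    and th_eta: "summable (\<lambda>j. (th j - eta j)\<^sup>2)"
    and S: "0 < S" "\<And>j. j < m \<Longrightarrow> post_var lam eps tau j \<le> S"
    and c: "0 < c" "c \<le> 1/2"
  shows "(\<integral>\<^sup>+Y. emeasure (sieve_posterior m lam eps tau eta Y)
      {v \<in> space (sieve_posterior m lam eps tau eta Y). sq_norm (\<lambda>j. v j - th j) < bias m th eta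
        + sigma_bar m lam eps tau - 4 * c * (real m * S + r_term m lam eps tau eta th)} \<partial>data_law lam eps th)
    \<le> exp (- 2 * c\<^sup>2 * real m)"
proof -
  define u where "u = c / S"
  define K where "K = sigma_bar m lam eps tau - 4 * c * (real m * S + r_term m lam eps tau eta th)"
  have u: "0 < u" using S c by (simp add: u_def)
  have marginal_pos: "0 < marginal_var lam eps tau j" for j
    using post_var_pos[of eps tau j lam, OF eps tau] post_var_le_marginal_var[OF eps, of lam tau j] by simp
  have factor: "sq_normal_mgf (marginal_var lam eps tau j) (post_bias lam eps tau eta th j) (-u)
      \<le> exp (- u * post_var lam eps tau j + 2 * c\<^sup>2)" if "j < m" for j
    using u S(2)[OF that] S c
    by (intro sq_normal_mgf_marginal_var_le_exp_of_nonpos[of eps tau j, OF eps tau]) (simp_all add: u_def field_simps)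
  have exponent: "-(-u)*K + (\<Sum>j<m. - u * post_var lam eps tau j + 2 * c\<^sup>2) \<le> - 2 * c\<^sup>2 * real m"
  proof -
    have "-(-u)*K + (\<Sum>j<m. - u * post_var lam eps tau j + 2 * c\<^sup>2)
        = - 2 * c\<^sup>2 * real m - 4 * c * u * r_term m lam eps tau eta th"
      using S by (simp add: K_def u_def sigma_bar_def sum.distrib sum_subtractf sum_negf sum_distrib_left power2_eq_square
          algebra_simps)
    also have "\<dots> \<le> - 2 * c\<^sup>2 * real m"
      using c u r_term_nonneg[of m lam eps tau eta th] by simp
    finally show ?thesis .
  qed
  have "(\<integral>\<^sup>+Y. emeasure (sieve_posterior m lam eps tau eta Y)
      {v \<in> space (sieve_posterior m lam eps tau eta Y). sq_norm (\<lambda>j. v j - th j) < bias m th eta + K} \<partial>data_law lam eps th)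
    \<le> exp (-(-u)*K + (\<Sum>j<m. - u * post_var lam eps tau j + 2 * c\<^sup>2))"
  proof (rule sieve_posterior_risk_le_exp[OF lam_nz eps tau th_eta _ _ factor])
    show "2 * (-u) * marginal_var lam eps tau j < 1" for j
      using mult_pos_pos[OF u marginal_pos[of j]] by simp
    show "0 \<le> -u * (x - bias m th eta - K)" if "x < bias m th eta + K" for x
      using u that by (simp add: mult_nonneg_nonpos)
  qed
  also have "\<dots> \<le> exp (- 2 * c\<^sup>2 * real m)" using exponent by simp
  finally show ?thesis by (simp add: K_def add_diff_eq)
qed

theorem mainTheorem2:
  fixes lam th eta tau :: "nat \<Rightarrow> real" and eps c :: real and m :: nat
  assumes lam_bdd: "bounded (range lam)"
    and lam_nz: "\<And>j. lam j \<noteq> 0"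
    and eps: "0 < eps" "eps < 1"
    and th_l2: "summable (\<lambda>j. (th j)\<^sup>2)"
    and th_eta_l2: "summable (\<lambda>j. (th j - eta j)\<^sup>2)"
    and tau_pos: "\<And>j. 0 < tau j"
    and c: "0 < c" "c < 1/5"
  shows
   "(\<integral>\<^sup>+ Y. emeasure (sieve_posterior m lam eps tau eta Y)
        {v \<in> space (sieve_posterior m lam eps tau eta Y).
           sq_norm (\<lambda>j. v j - th j) > bias m th eta + 3 * sigma_bar m lam eps tau
              + 3/2 * real m * sigma_max m lam eps tau + 4 * r_term m lam eps tau eta th}
      \<partial>data_law lam eps th) \<le> ennreal (2 * exp (- real m / 36))
    \<and>
    (\<integral>\<^sup>+ Y. emeasure (sieve_posterior m lam eps tau eta Y)
        {v \<in> space (sieve_posterior m lam eps tau eta Y).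
           sq_norm (\<lambda>j. v j - th j) < bias m th eta + sigma_bar m lam eps tau
              - 4 * c * (real m * sigma_max m lam eps tau + r_term m lam eps tau eta th)}
      \<partial>data_law lam eps th) \<le> ennreal (2 * exp (- c\<^sup>2 * real m / 2))"
proof -
  \<comment> \<open>For \<open>m = 0\<close>, \<open>sigma_max\<close> is the maximum of an empty set; there \<open>S\<close> only ever occurs multiplied by \<open>m\<close>.\<close>
  define S where "S = (if m = 0 then 1 else sigma_max m lam eps tau)"
  have post_var_le_S: "post_var lam eps tau j \<le> S" if "j < m" for j
    using that by (auto simp: S_def sigma_max_def)
  have S_pos: "0 < S"
  proof (cases "m = 0")
    case False
    then have "S \<in> post_var lam eps tau ` {..<m}" unfolding S_def sigma_max_def by (auto intro!: Max_in)
    then show ?thesis using post_var_pos[OF eps(1) tau_pos] by auto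
  qed (simp add: S_def)
  have S_eq: "real m * S = real m * sigma_max m lam eps tau" "3/2 * real m * S = 3/2 * real m * sigma_max m lam eps tau"
    by (simp_all add: S_def)
  have "exp (- real m / 16) \<le> exp (- real m / 36)" "exp (- 2 * c\<^sup>2 * real m) \<le> exp (- c\<^sup>2 * real m / 2)"
    using zero_le_power2[of c] by simp_all
  then have "exp (- real m / 16) \<le> 2 * exp (- real m / 36)" "exp (- 2 * c\<^sup>2 * real m) \<le> 2 * exp (- c\<^sup>2 * real m / 2)"
    by (smt (verit) exp_gt_zero)+
  moreover have "c \<le> 1/2" using c by simp
  ultimately show ?thesis
    using sieve_posterior_upper_tail[where m=m, OF lam_nz eps(1) tau_pos th_eta_l2 S_pos post_var_le_S]
      sieve_posterior_lower_tail[where m=m, OF lam_nz eps(1) tau_pos th_eta_l2 S_pos post_var_le_S c(1)]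
    unfolding S_eq by (meson ennreal_leI order.trans)
qed

end
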